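(* Consider the matched-pair setting below. Suppose that the assumed model over $\gamma$ is parametrized by $\lambda$, producing a log-likelihood contribution $\ell(\psi,\lambda;y_1,y_0)$, assumed strictly concave. Suppose further that, conditionally on $\gamma$, $Y_1$ and $Y_0$ have a joint distribution that is parametrized $\psi$-symmetrically, and that the group induces antisymmetry on the log-likelihood derivative. Then $\psi^*\perp_m\Lambda$ and $$0=\mathbb{E}_m[\nabla_\psi\ell(\psi^*,\lambda)]=\int_{\mathscr{Y}}\int_{\mathscr{Y}}\nabla_\psi\ell(\psi^*,\lambda;y_1,y_0)\,m(y_1,y_0)\,dy_1dy_0$$ for all $\lambda\in\Lambda$. Consequently $\psi_m^0=\psi^*$.
   Context: Matched pairs: for each of $n$ independent pairs, $(Y_1,Y_0)$ are outcomes on a treated and an untreated unit. Conditionally on a pair-specific nuisance parameter $\gamma$, $Y_1$ and $Y_0$ are independent with densities $f_1(\cdot;\psi,\gamma)$ and $f_0(\cdot;\psi,\gamma)$, and $\psi$ is an interest (treatment) parameter with true value $\psi^*$. The $\gamma$'s are i.i.d. with an unknown density $f$, so the true density of a pair is $m(y_1,y_0)=\int f_1(y_1;\psi^*,\gamma)f_0(y_0;\psi^*,\gamma)f(\gamma)\,d\gamma$. The assumed model takes $\gamma$ to have density $h(\gamma;\lambda)$, $\lambda\in\Lambda$, giving the single-pair log-likelihood $\ell(\psi,\lambda;y_1,y_0)=\log\int f_1(y_1;\psi,\gamma)f_0(y_0;\psi,\gamma)h(\gamma;\lambda)\,d\gamma$; the full log-likelihood $\ell(\psi,\lambda)$ is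 the sum over pairs. $\mathbb{E}_m$ is expectation under $m$. $(\psi_m^0,\lambda_m^0)$ solves $\mathbb{E}_m[\nabla_{(\psi,\lambda)}\ell(\psi_m^0,\lambda_m^0)]=0$ (the probability limit of the maximum likelihood estimator). $\psi^*\perp_m\Lambda$ means $\mathbb{E}_m[\nabla^2_{\psi\lambda}\ell(\psi^*,\lambda)]=0$ for all $\lambda\in\Lambda$. Transformation model: a group $G$ acts continuously on the sample space $\mathscr{Y}$ and on the parameter space $\Gamma$ of $\gamma$, and the distributions satisfy $p(gE;g\gamma)=p(E;\gamma)$ for all $g\in G$, events $E$, $\gamma\in\Gamma$. Symmetric parametrization: there is $g=g_\psi\in G$ depending only on $\psi$ and a density $f_U(u;\gamma)$ with $f_1(y_1;\psi,\gamma)=f_1(y_1;g\gamma)$, $f_0(y_0;\psi,\gamma)=f_0(y_0;g^{-1}\gamma)$ and $f_U(u;\gamma)du=f_1(gu;g\gamma)d(gu)=f_0(g^{-1}u;g^{-1}\gamma)d(g^{-1}u)$; equivalently, with $u_1=g^{-1}y_1$, $u_0=gy_0$, $f_1(y_1;g\gamma)f_0(y_0;g^{-1}\gamma)dy_1dy_0=f_U(u_1;\gamma)f_U(u_0;\gamma)du_1du_0$. Antisymmetry: with conditional log-likelihood $\ell(\psi;\gamma,y_1,y_0)=\log f_1(y_1;g\gamma)+\log f_0(y_0;g^{-1}\gamma)$, the derivative $\nabla_\psi\ell$, expressed in terms of $u_1,u_0$, satisfies $\nabla_\psi\ell(\psi;\gamma,u_1,u_0)=-\nabla_\psi\ell(\psi;\gamma,u_0,u_1)$.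 *)

theory Defs
  imports "HOL-Analysis.Analysis" "HOL-Algebra.Group"
begin

definition strict_concave_on :: "'a::real_vector set \<Rightarrow> ('a \<Rightarrow> real) \<Rightarrow> bool" where
  "strict_concave_on S F \<longleftrightarrow> convex S \<and>
     (\<forall>x\<in>S. \<forall>y\<in>S. x \<noteq> y \<longrightarrow>
        (\<forall>u::real. 0 < u \<and> u < 1 \<longrightarrow> F (u *\<^sub>R x + (1 - u) *\<^sub>R y) > u * F x + (1 - u) * F y))"

definition group_action_on :: "('a, 'b) monoid_scheme \<Rightarrow> 'x set \<Rightarrow> ('a \<Rightarrow> 'x \<Rightarrow> 'x) \<Rightarrow> bool" where
  "group_action_on G X act \<longleftrightarrow>
     (\<forall>g\<in>carrier G. \<forall>x\<in>X. act g x \<in> X) \<and>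
     (\<forall>x\<in>X. act \<one>\<^bsub>G\<^esub> x = x) \<and>
     (\<forall>g\<in>carrier G. \<forall>k\<in>carrier G. \<forall>x\<in>X. act (g \<otimes>\<^bsub>G\<^esub> k) x = act g (act k x))"

definition prob_density :: "'x measure \<Rightarrow> ('x \<Rightarrow> real) \<Rightarrow> bool" where
  "prob_density M p \<longleftrightarrow> p \<in> borel_measurable M \<and> (\<forall>x\<in>space M. 0 \<le> p x)
      \<and> integrable M p \<and> (\<integral>x. p x \<partial>M) = 1"

definition pair_lik ::
  "(real \<Rightarrow> 'g \<Rightarrow> 'y \<Rightarrow> real) \<Rightarrow> (real \<Rightarrow> 'g \<Rightarrow> 'y \<Rightarrow> real) \<Rightarrow> 'g measure
    \<Rightarrow> ('l \<Rightarrow> 'g \<Rightarrow> real) \<Rightarrow> real \<Rightarrow> 'l \<Rightarrow> 'y \<Rightarrow> 'y \<Rightarrow> real" where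
  "pair_lik f1 f0 Gm h psi lam y1 y0 = (\<integral>\<gamma>. f1 psi \<gamma> y1 * f0 psi \<gamma> y0 * h lam \<gamma> \<partial>Gm)"

definition pair_loglik ::
  "(real \<Rightarrow> 'g \<Rightarrow> 'y \<Rightarrow> real) \<Rightarrow> (real \<Rightarrow> 'g \<Rightarrow> 'y \<Rightarrow> real) \<Rightarrow> 'g measure
    \<Rightarrow> ('l \<Rightarrow> 'g \<Rightarrow> real) \<Rightarrow> real \<Rightarrow> 'l \<Rightarrow> 'y \<Rightarrow> 'y \<Rightarrow> real" where
  "pair_loglik f1 f0 Gm h psi lam y1 y0 = ln (pair_lik f1 f0 Gm h psi lam y1 y0)"

definition true_dens ::
  "(real \<Rightarrow> 'g \<Rightarrow> 'y \<Rightarrow> real) \<Rightarrow> (real \<Rightarrow> 'g \<Rightarrow> 'y \<Rightarrow> real) \<Rightarrow> 'g measure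
    \<Rightarrow> ('g \<Rightarrow> real) \<Rightarrow> real \<Rightarrow> 'y \<Rightarrow> 'y \<Rightarrow> real" where
  "true_dens f1 f0 Gm f psis y1 y0 = (\<integral>\<gamma>. f1 psis \<gamma> y1 * f0 psis \<gamma> y0 * f \<gamma> \<partial>Gm)"

definition Em :: "'y measure \<Rightarrow> ('y \<Rightarrow> 'y \<Rightarrow> real) \<Rightarrow> ('y \<Rightarrow> 'y \<Rightarrow> real) \<Rightarrow> real" where
  "Em Ym m phi = (\<integral>z. phi (fst z) (snd z) * m (fst z) (snd z) \<partial>(Ym \<Otimes>\<^sub>M Ym))"

definition Em_integrable :: "'y measure \<Rightarrow> ('y \<Rightarrow> 'y \<Rightarrow> real) \<Rightarrow> ('y \<Rightarrow> 'y \<Rightarrow> real) \<Rightarrow> bool" where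
  "Em_integrable Ym m phi \<longleftrightarrow> integrable (Ym \<Otimes>\<^sub>M Ym) (\<lambda>z. phi (fst z) (snd z) * m (fst z) (snd z))"

definition dpsi :: "(real \<Rightarrow> 'l \<Rightarrow> 'y \<Rightarrow> 'y \<Rightarrow> real) \<Rightarrow> real \<Rightarrow> 'l \<Rightarrow> 'y \<Rightarrow> 'y \<Rightarrow> real" where
  "dpsi L psi lam y1 y0 = deriv (\<lambda>p. L p lam y1 y0) psi"

definition dlam :: "(real \<Rightarrow> 'l::real_normed_vector \<Rightarrow> 'y \<Rightarrow> 'y \<Rightarrow> real) \<Rightarrow> 'l \<Rightarrow> real \<Rightarrow> 'l \<Rightarrow> 'y \<Rightarrow> 'y \<Rightarrow> real" where
  "dlam L b psi lam y1 y0 = deriv (\<lambda>t. L psi (lam + t *\<^sub>R b) y1 y0) 0"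

text \<open>\<open>psi* \<perp>_m \<Lambda>\<close>: \<open>E_m[\<nabla>^2_{\<psi>\<lambda>} \<ell>(psi*,lambda)] = 0\<close> for all lambda in \<Lambda>
  (the vector \<open>\<nabla>^2_{\<psi>\<lambda>}\<close> written out componentwise over the basis).\<close>
definition m_orthogonal ::
  "'y measure \<Rightarrow> ('y \<Rightarrow> 'y \<Rightarrow> real) \<Rightarrow> (real \<Rightarrow> 'l::euclidean_space \<Rightarrow> 'y \<Rightarrow> 'y \<Rightarrow> real) \<Rightarrow> real \<Rightarrow> 'l set \<Rightarrow> bool" where
  "m_orthogonal Ym m L psis Lam \<longleftrightarrow>
     (\<forall>lam\<in>Lam. \<forall>b\<in>Basis. Em Ym m (dlam (dpsi L) b psis lam) = 0)"

definition solves_score ::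
  "'y measure \<Rightarrow> ('y \<Rightarrow> 'y \<Rightarrow> real) \<Rightarrow> (real \<Rightarrow> 'l::euclidean_space \<Rightarrow> 'y \<Rightarrow> 'y \<Rightarrow> real) \<Rightarrow> real \<Rightarrow> 'l \<Rightarrow> bool" where
  "solves_score Ym m L psi0 lam0 \<longleftrightarrow>
     Em Ym m (dpsi L psi0 lam0) = 0 \<and> (\<forall>b\<in>Basis. Em Ym m (dlam L b psi0 lam0) = 0)"

definition cond_score ::
  "(real \<Rightarrow> 'g \<Rightarrow> 'y \<Rightarrow> real) \<Rightarrow> (real \<Rightarrow> 'g \<Rightarrow> 'y \<Rightarrow> real) \<Rightarrow> real \<Rightarrow> 'g \<Rightarrow> 'y \<Rightarrow> 'y \<Rightarrow> real" where
  "cond_score f1 f0 psi \<gamma> y1 y0 = deriv (\<lambda>p. ln (f1 p \<gamma> y1) + ln (f0 p \<gamma> y0)) psi"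

end

(* Write g = g_psi* and pass to the coordinates u1 = g^-1 y1, u0 = g y0. There the true pair
   density m, the model likelihood and its psi-derivative become integrals of fU(u1) fU(u0)
   against f, h_lambda and cond_score * h_lambda; the first two are symmetric in (u1, u0) and
   the third is antisymmetric. So the psi-score times m pulls back to an antisymmetric function
   on the product space and has mean zero for every lambda; differentiating this identity in
   lambda gives psi* _|_m Lambda. Strict concavity makes the psi-score strictly decreasing in psi
   at every pair, and m is a probability density on pairs, hence not almost everywhere zero, so
   E_m of the psi-score is strictly decreasing in psi and psi* is its only zero. *)

theory Submission
  imports Defs
begin

lemma strict_concave_onD:
  assumes "strict_concave_on S F" "x \<in> S" "y \<in> S" "x \<noteq> y" "0 < u" "u < 1"
  shows "u * F x + (1 - u) * F y < F (u *\<^sub>R x + (1 - u) *\<^sub>R y)"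
  using assms unfolding strict_concave_on_def by blast

lemma strict_concave_on_imp_concave_on:
  assumes "strict_concave_on S F"
  shows "concave_on S F"
  unfolding concave_on_def
proof (rule convex_onI)
  show "convex S" using assms by (simp add: strict_concave_on_def)
next
  fix t :: real and x y assume t: "0 < t" "t < 1" and xy: "x \<in> S" "y \<in> S"
  show "- F ((1 - t) *\<^sub>R x + t *\<^sub>R y) \<le> (1 - t) * - F x + t * - F y"
  proof (cases "x = y")
    case True
    then show ?thesis by (simp add: algebra_simps)
  next
    case False
    have "F ((1 - t) *\<^sub>R x + (1 - (1 - t)) *\<^sub>R y) > (1 - t) * F x + (1 - (1 - t)) * F y"
      using xy t False by (intro strict_concave_onD[OF assms]) auto
    then show ?thesis by simp
  qed
qed

lemma strict_concave_on_Times_slice: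
  assumes conc: "strict_concave_on (A \<times> B) F" and b: "b \<in> B"
  shows "strict_concave_on A (\<lambda>a. F (a, b))"
proof -
  have "convex (fst ` (A \<times> B))"
    using conc by (intro convex_linear_image) (auto simp: strict_concave_on_def linear_fst)
  then have "convex A" using b by (metis empty_iff fst_image_times)
  moreover have "(u *\<^sub>R x + (1 - u) *\<^sub>R y, b) = u *\<^sub>R (x, b) + (1 - u) *\<^sub>R (y, b)" for u x y
    by (simp add: algebra_simps flip: scaleR_add_left)
  ultimately show ?thesis
    using conc b unfolding strict_concave_on_def by fastforce
qed

lemma strict_concave_on_deriv_less:
  fixes \<phi> :: "real \<Rightarrow> real"
  assumes conc: "strict_concave_on P \<phi>" and "open P"
    and ab: "a \<in> P" "b \<in> P" "a < b"
    and da: "(\<phi> has_real_derivative da) (at a)" and db: "(\<phi> has_real_derivative db) (at b)"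
  shows "db < da"
proof -
  have cvx: "convex_on P (\<lambda>x. - \<phi> x)" and "convex P"
    using strict_concave_on_imp_concave_on[OF conc] by (auto simp: concave_on_def convex_on_imp_convex)
  have conn: "connected P" using \<open>convex P\<close> by (rule convex_connected)
  define c where "c = (a + b) / 2"
  have c: "c \<in> P"
    using convexD[OF \<open>convex P\<close> ab(1,2), of "1/2" "1/2"] by (simp add: c_def field_simps)
  have "- \<phi> c - - \<phi> a \<ge> - da * (c - a)"
    using \<open>open P\<close> ab c
    by (intro convex_on_imp_above_tangent[OF cvx conn])
       (auto simp: interior_open intro!: DERIV_minus has_field_derivative_at_within[OF da])
  moreover have "- \<phi> c - - \<phi> b \<ge> - db * (c - b)"
    using \<open>open P\<close> ab c
    by (intro convex_on_imp_above_tangent[OF cvx conn])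
       (auto simp: interior_open intro!: DERIV_minus has_field_derivative_at_within[OF db])
  moreover have "\<phi> c > \<phi> a / 2 + \<phi> b / 2"
  proof -
    have "\<phi> ((1/2) *\<^sub>R a + (1 - 1/2) *\<^sub>R b) > 1/2 * \<phi> a + (1 - 1/2) * \<phi> b"
      using ab by (intro strict_concave_onD[OF conc]) auto
    then show ?thesis by (simp add: c_def field_simps)
  qed
  ultimately have "0 < da * (c - a) + db * (c - b)"
    by linarith
  also have "\<dots> = (da - db) * (b - a) / 2"
    by (simp add: c_def field_simps)
  finally have "0 < (da - db) * (b - a)" by simp
  with ab(3) show ?thesis by (simp add: zero_less_mult_iff)
qed

lemma nn_integral_prob_density:
  assumes "prob_density M p"
  shows "(\<integral>\<^sup>+x. ennreal (p x) \<partial>M) = 1"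
  using assms by (subst nn_integral_eq_integral) (auto simp: prob_density_def intro!: AE_I2)

lemma integral_pos_mult_prob_density:
  assumes w: "prob_density M w" and pos: "\<forall>x\<in>space M. 0 < a x"
    and int: "integrable M (\<lambda>x. a x * w x)"
  shows "0 < (\<integral>x. a x * w x \<partial>M)"
proof -
  have w_nonneg: "\<forall>x\<in>space M. 0 \<le> w x"
    using w by (simp add: prob_density_def)
  have nonneg: "AE x in M. 0 \<le> a x * w x"
    using pos w_nonneg by (intro AE_I2) (simp add: less_imp_le)
  have "(\<integral>x. a x * w x \<partial>M) \<noteq> 0"
  proof
    assume "(\<integral>x. a x * w x \<partial>M) = 0"
    then have "AE x in M. a x * w x = 0"
      using integral_nonneg_eq_0_iff_AE[OF int nonneg] by simp
    then have "AE x in M. w x = 0"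
      by (rule AE_mp) (use pos in \<open>auto intro!: AE_I2\<close>)
    then have "(\<integral>x. w x \<partial>M) = 0"
      by (simp add: integral_eq_zero_AE)
    with w show False by (simp add: prob_density_def)
  qed
  moreover have "0 \<le> (\<integral>x. a x * w x \<partial>M)"
    using nonneg by (rule integral_nonneg_AE)
  ultimately show ?thesis by simp
qed

lemma measurable_mixture_of_products:
  fixes k1 k0 :: "'g \<Rightarrow> 'y \<Rightarrow> real" and w :: "'g \<Rightarrow> real"
  assumes "(\<lambda>z. k1 (fst z) (snd z)) \<in> borel_measurable (N \<Otimes>\<^sub>M M)"
    and "(\<lambda>z. k0 (fst z) (snd z)) \<in> borel_measurable (N \<Otimes>\<^sub>M M)"
    and [measurable]: "w \<in> borel_measurable N"
  shows "(\<lambda>(z, \<gamma>). k1 \<gamma> (fst z) * k0 \<gamma> (snd z) * w \<gamma>) \<in> borel_measurable ((M \<Otimes>\<^sub>M M) \<Otimes>\<^sub>M N)"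
proof -
  have "(\<lambda>x. (snd x, fst (fst x))) \<in> (M \<Otimes>\<^sub>M M) \<Otimes>\<^sub>M N \<rightarrow>\<^sub>M N \<Otimes>\<^sub>M M"
    "(\<lambda>x. (snd x, snd (fst x))) \<in> (M \<Otimes>\<^sub>M M) \<Otimes>\<^sub>M N \<rightarrow>\<^sub>M N \<Otimes>\<^sub>M M"
    by measurable
  from measurable_compose[OF this(1) assms(1)] measurable_compose[OF this(2) assms(2)]
  have [measurable]: "(\<lambda>x. k1 (snd x) (fst (fst x))) \<in> borel_measurable ((M \<Otimes>\<^sub>M M) \<Otimes>\<^sub>M N)"
    "(\<lambda>x. k0 (snd x) (snd (fst x))) \<in> borel_measurable ((M \<Otimes>\<^sub>M M) \<Otimes>\<^sub>M N)"
    by simp_all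
  show ?thesis by (simp add: split_beta') measurable
qed

lemma nn_integral_mixture_of_products:
  fixes k1 k0 :: "'g \<Rightarrow> 'y \<Rightarrow> real" and w :: "'g \<Rightarrow> real"
  assumes "sigma_finite_measure M" "sigma_finite_measure N"
    and k1_meas[measurable]: "(\<lambda>z. k1 (fst z) (snd z)) \<in> borel_measurable (N \<Otimes>\<^sub>M M)"
    and k0_meas[measurable]: "(\<lambda>z. k0 (fst z) (snd z)) \<in> borel_measurable (N \<Otimes>\<^sub>M M)"
    and k1: "\<forall>\<gamma>\<in>space N. prob_density M (k1 \<gamma>)" and k0: "\<forall>\<gamma>\<in>space N. prob_density M (k0 \<gamma>)"
    and w: "prob_density N w"
  shows "(\<integral>\<^sup>+z. \<integral>\<^sup>+\<gamma>. ennreal (k1 \<gamma> (fst z) * k0 \<gamma> (snd z) * w \<gamma>) \<partial>N \<partial>(M \<Otimes>\<^sub>M M)) = 1"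
proof -
  interpret M: sigma_finite_measure M by fact
  interpret N: sigma_finite_measure N by fact
  interpret MM: pair_sigma_finite M M ..
  interpret MM_N: pair_sigma_finite "M \<Otimes>\<^sub>M M" N ..
  have [measurable]: "w \<in> borel_measurable N" using w by (simp add: prob_density_def)
  have inner: "(\<integral>\<^sup>+z. ennreal (k1 \<gamma> (fst z) * k0 \<gamma> (snd z) * w \<gamma>) \<partial>(M \<Otimes>\<^sub>M M)) = ennreal (w \<gamma>)"
    if \<gamma>: "\<gamma> \<in> space N" for \<gamma>
  proof -
    have d1: "prob_density M (k1 \<gamma>)" and d0: "prob_density M (k0 \<gamma>)" using k1 k0 \<gamma> by auto
    then have [measurable]: "k1 \<gamma> \<in> borel_measurable M" "k0 \<gamma> \<in> borel_measurable M"
      by (auto simp: prob_density_def)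
    have "(\<integral>\<^sup>+z. ennreal (k1 \<gamma> (fst z) * k0 \<gamma> (snd z) * w \<gamma>) \<partial>(M \<Otimes>\<^sub>M M))
        = (\<integral>\<^sup>+z. ennreal (w \<gamma>) * (ennreal (k1 \<gamma> (fst z)) * ennreal (k0 \<gamma> (snd z))) \<partial>(M \<Otimes>\<^sub>M M))"
      using d1 d0 w \<gamma>
      by (intro nn_integral_cong) (auto simp: prob_density_def space_pair_measure ennreal_mult' mult_ac)
    also have "\<dots> = ennreal (w \<gamma>) * (\<integral>\<^sup>+z. ennreal (k1 \<gamma> (fst z)) * ennreal (k0 \<gamma> (snd z)) \<partial>(M \<Otimes>\<^sub>M M))"
      by (rule nn_integral_cmult) measurable
    also have "\<dots> = ennreal (w \<gamma>) * (\<integral>\<^sup>+x. \<integral>\<^sup>+y. ennreal (k1 \<gamma> x) * ennreal (k0 \<gamma> y) \<partial>M \<partial>M)"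
      using M.nn_integral_fst[where f = "\<lambda>z. ennreal (k1 \<gamma> (fst z)) * ennreal (k0 \<gamma> (snd z))"] by simp
    also have "\<dots> = ennreal (w \<gamma>) * (\<integral>\<^sup>+x. ennreal (k1 \<gamma> x) * (\<integral>\<^sup>+y. ennreal (k0 \<gamma> y) \<partial>M) \<partial>M)"
      by (simp add: nn_integral_cmult)
    also have "\<dots> = ennreal (w \<gamma>)"
      using nn_integral_prob_density[OF d1] nn_integral_prob_density[OF d0] by simp
    finally show ?thesis .
  qed
  have "(\<integral>\<^sup>+z. \<integral>\<^sup>+\<gamma>. ennreal (k1 \<gamma> (fst z) * k0 \<gamma> (snd z) * w \<gamma>) \<partial>N \<partial>(M \<Otimes>\<^sub>M M))
      = (\<integral>\<^sup>+\<gamma>. \<integral>\<^sup>+z. ennreal (k1 \<gamma> (fst z) * k0 \<gamma> (snd z) * w \<gamma>) \<partial>(M \<Otimes>\<^sub>M M) \<partial>N)"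
    using measurable_mixture_of_products[OF k1_meas k0_meas, of w] w
    by (intro MM_N.Fubini'[symmetric]) (auto simp: prob_density_def)
  also have "\<dots> = (\<integral>\<^sup>+\<gamma>. ennreal (w \<gamma>) \<partial>N)"
    by (intro nn_integral_cong inner)
  also have "\<dots> = 1" by (rule nn_integral_prob_density[OF w])
  finally show ?thesis .
qed

lemma mixture_of_products_not_AE_zero:
  fixes k1 k0 :: "'g \<Rightarrow> 'y \<Rightarrow> real" and w :: "'g \<Rightarrow> real"
  assumes "sigma_finite_measure M" "sigma_finite_measure N"
    and k1_meas: "(\<lambda>z. k1 (fst z) (snd z)) \<in> borel_measurable (N \<Otimes>\<^sub>M M)"
    and k0_meas: "(\<lambda>z. k0 (fst z) (snd z)) \<in> borel_measurable (N \<Otimes>\<^sub>M M)"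
    and k1: "\<forall>\<gamma>\<in>space N. prob_density M (k1 \<gamma>)" and k0: "\<forall>\<gamma>\<in>space N. prob_density M (k0 \<gamma>)"
    and w: "prob_density N w"
  shows "\<not> (AE z in M \<Otimes>\<^sub>M M. (\<integral>\<gamma>. k1 \<gamma> (fst z) * k0 \<gamma> (snd z) * w \<gamma> \<partial>N) = 0)"
proof
  interpret N: sigma_finite_measure N by fact
  define I where "I z = (\<integral>\<^sup>+\<gamma>. ennreal (k1 \<gamma> (fst z) * k0 \<gamma> (snd z) * w \<gamma>) \<partial>N)" for z
  have "w \<in> borel_measurable N" using w by (simp add: prob_density_def)
  note joint[measurable] = measurable_mixture_of_products[OF k1_meas k0_meas this]
  have meas: "(\<lambda>\<gamma>. k1 \<gamma> (fst z) * k0 \<gamma> (snd z) * w \<gamma>) \<in> borel_measurable N"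
    if "z \<in> space (M \<Otimes>\<^sub>M M)" for z
    using measurable_Pair2[OF joint that] by simp
  have nonneg: "\<forall>\<gamma>\<in>space N. 0 \<le> k1 \<gamma> (fst z) * k0 \<gamma> (snd z) * w \<gamma>"
    if "z \<in> space (M \<Otimes>\<^sub>M M)" for z
    using that k1 k0 w by (auto simp: prob_density_def space_pair_measure)
  have total: "(\<integral>\<^sup>+z. I z \<partial>(M \<Otimes>\<^sub>M M)) = 1"
    unfolding I_def by (rule nn_integral_mixture_of_products) fact+
  then have "AE z in M \<Otimes>\<^sub>M M. I z \<noteq> \<infinity>"
    unfolding I_def by (intro nn_integral_PInf_AE) measurable
  moreover assume "AE z in M \<Otimes>\<^sub>M M. (\<integral>\<gamma>. k1 \<gamma> (fst z) * k0 \<gamma> (snd z) * w \<gamma> \<partial>N) = 0"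
  moreover have "AE z in M \<Otimes>\<^sub>M M. z \<in> space (M \<Otimes>\<^sub>M M)" by (rule AE_space)
  ultimately have "AE z in M \<Otimes>\<^sub>M M. I z = 0"
  proof eventually_elim
    case (elim z)
    have "enn2real (I z) = (\<integral>\<gamma>. k1 \<gamma> (fst z) * k0 \<gamma> (snd z) * w \<gamma> \<partial>N)"
      unfolding I_def using meas[OF elim(3)] nonneg[OF elim(3)]
      by (intro integral_eq_nn_integral[symmetric] AE_I2) auto
    with elim(1,2) show "I z = 0" by (simp add: enn2real_eq_0_iff)
  qed
  then have "(\<integral>\<^sup>+z. I z \<partial>(M \<Otimes>\<^sub>M M)) = (\<integral>\<^sup>+z. 0 \<partial>(M \<Otimes>\<^sub>M M))"
    by (rule nn_integral_cong_AE)
  with total show False by simp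
qed

lemma integral_pair_measure_pullback:
  fixes \<Phi> :: "'y \<times> 'y \<Rightarrow> real"
  assumes "sigma_finite_measure M"
    and [measurable]: "T1 \<in> M \<rightarrow>\<^sub>M M" "T0 \<in> M \<rightarrow>\<^sub>M M"
    and [measurable]: "J1 \<in> borel_measurable M" "J0 \<in> borel_measurable M"
    and J_nonneg: "\<forall>u\<in>space M. 0 \<le> J1 u" "\<forall>u\<in>space M. 0 \<le> J0 u"
    and T1_J1: "distr (density M (\<lambda>u. ennreal (J1 u))) M T1 = M"
    and T0_J0: "distr (density M (\<lambda>u. ennreal (J0 u))) M T0 = M"
    and [measurable]: "\<Phi> \<in> borel_measurable (M \<Otimes>\<^sub>M M)"
  shows "integral\<^sup>L (M \<Otimes>\<^sub>M M) \<Phi> = (\<integral>z. J1 (fst z) * J0 (snd z) * \<Phi> (T1 (fst z), T0 (snd z)) \<partial>(M \<Otimes>\<^sub>M M))"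
proof -
  let ?D1 = "density M (\<lambda>u. ennreal (J1 u))" and ?D0 = "density M (\<lambda>u. ennreal (J0 u))"
  have "sigma_finite_measure ?D0"
    by (rule sigma_finite_measure_distr[of _ M T0]) (simp_all add: T0_J0 assms(1))
  have "M \<Otimes>\<^sub>M M = distr ?D1 M T1 \<Otimes>\<^sub>M distr ?D0 M T0" by (simp add: T1_J1 T0_J0)
  also have "\<dots> = distr (?D1 \<Otimes>\<^sub>M ?D0) (M \<Otimes>\<^sub>M M) (\<lambda>(x, y). (T1 x, T0 y))"
    by (rule pair_measure_distr) (simp_all add: T0_J0 assms(1))
  also have "?D1 \<Otimes>\<^sub>M ?D0 = density (M \<Otimes>\<^sub>M M) (\<lambda>z. ennreal (J1 (fst z) * J0 (snd z)))"
    using J_nonneg \<open>sigma_finite_measure ?D0\<close>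
    by (subst pair_measure_density)
       (auto intro!: density_cong AE_I2 simp: assms(1) space_pair_measure ennreal_mult)
  finally have "integral\<^sup>L (M \<Otimes>\<^sub>M M) \<Phi>
      = integral\<^sup>L (distr (density (M \<Otimes>\<^sub>M M) (\<lambda>z. ennreal (J1 (fst z) * J0 (snd z))))
          (M \<Otimes>\<^sub>M M) (\<lambda>(x, y). (T1 x, T0 y))) \<Phi>"
    by (rule arg_cong)
  also have "\<dots> = (\<integral>z. \<Phi> (T1 (fst z), T0 (snd z)) \<partial>density (M \<Otimes>\<^sub>M M) (\<lambda>z. ennreal (J1 (fst z) * J0 (snd z))))"
    by (subst integral_distr) (simp_all add: split_beta')
  also have "\<dots> = (\<integral>z. J1 (fst z) * J0 (snd z) * \<Phi> (T1 (fst z), T0 (snd z)) \<partial>(M \<Otimes>\<^sub>M M))"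
    using J_nonneg by (subst integral_density) (auto intro!: AE_I2 simp: space_pair_measure)
  finally show ?thesis .
qed

lemma integral_antisymmetric_eq_0:
  fixes \<Psi> :: "'y \<times> 'y \<Rightarrow> real"
  assumes "sigma_finite_measure M" and \<Psi>_meas: "\<Psi> \<in> borel_measurable (M \<Otimes>\<^sub>M M)"
    and antisym: "\<forall>x\<in>space M. \<forall>y\<in>space M. \<Psi> (y, x) = - \<Psi> (x, y)"
  shows "integral\<^sup>L (M \<Otimes>\<^sub>M M) \<Psi> = 0"
proof -
  interpret M: sigma_finite_measure M by fact
  interpret MM: pair_sigma_finite M M ..
  have "integral\<^sup>L (M \<Otimes>\<^sub>M M) \<Psi> = (\<integral>(x, y). \<Psi> (y, x) \<partial>(M \<Otimes>\<^sub>M M))"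
    by (rule MM.integral_product_swap[OF \<Psi>_meas, symmetric])
  also have "\<dots> = (\<integral>z. - \<Psi> z \<partial>(M \<Otimes>\<^sub>M M))"
    using antisym by (intro Bochner_Integration.integral_cong) (auto simp: space_pair_measure)
  also have "\<dots> = - integral\<^sup>L (M \<Otimes>\<^sub>M M) \<Psi>" by simp
  finally show ?thesis by simp
qed

lemma AE_weight_eq_0_of_integral_eq:
  fixes \<phi> \<psi> w :: "'x \<Rightarrow> real"
  assumes int: "integrable M (\<lambda>x. \<phi> x * w x)" "integrable M (\<lambda>x. \<psi> x * w x)"
    and eq: "(\<integral>x. \<phi> x * w x \<partial>M) = (\<integral>x. \<psi> x * w x \<partial>M)"
    and less: "\<forall>x\<in>space M. \<psi> x < \<phi> x" and w: "\<forall>x\<in>space M. 0 \<le> w x"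
  shows "AE x in M. w x = 0"
proof -
  have diff_int: "integrable M (\<lambda>x. (\<phi> x - \<psi> x) * w x)"
    using Bochner_Integration.integrable_diff[OF int] by (simp add: left_diff_distrib)
  have "(\<integral>x. (\<phi> x - \<psi> x) * w x \<partial>M) = 0"
    using Bochner_Integration.integral_diff[OF int] eq by (simp add: left_diff_distrib)
  moreover have "AE x in M. 0 \<le> (\<phi> x - \<psi> x) * w x"
    using less w by (intro AE_I2) (simp add: less_imp_le)
  ultimately have "AE x in M. (\<phi> x - \<psi> x) * w x = 0"
    using integral_nonneg_eq_0_iff_AE[OF diff_int] by simp
  then show ?thesis
    by (rule AE_mp) (use less in \<open>auto intro!: AE_I2\<close>)
qed

lemma deriv_mult_eq_deriv_sum_ln:
  fixes F G :: "real \<Rightarrow> real"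
  assumes "F differentiable at x" "G differentiable at x" "0 < F x" "0 < G x"
  shows "deriv (\<lambda>p. F p * G p) x = deriv (\<lambda>p. ln (F p) + ln (G p)) x * (F x * G x)"
proof -
  have dF: "(F has_real_derivative deriv F x) (at x)" and dG: "(G has_real_derivative deriv G x) (at x)"
    using assms(1,2) by (simp_all add: DERIV_deriv_iff_real_differentiable)
  have deriv_mult: "deriv (\<lambda>p. F p * G p) x = deriv F x * G x + deriv G x * F x"
    by (rule DERIV_imp_deriv) (rule DERIV_mult[OF dF dG])
  have "((\<lambda>p. ln (F p)) has_real_derivative deriv F x / F x) (at x)"
    "((\<lambda>p. ln (G p)) has_real_derivative deriv G x / G x) (at x)"
    using DERIV_chain2[OF DERIV_ln_divide[OF assms(3)] dF] DERIV_chain2[OF DERIV_ln_divide[OF assms(4)] dG]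
    by simp_all
  then have "deriv (\<lambda>p. ln (F p) + ln (G p)) x = deriv F x / F x + deriv G x / G x"
    by (intro DERIV_imp_deriv DERIV_add)
  with deriv_mult show ?thesis
    using assms(3,4) by (simp add: field_simps)
qed

locale symmetric_matched_pairs =
  fixes G :: "'a monoid"
    and actY :: "'a \<Rightarrow> 'y \<Rightarrow> 'y" and actG :: "'a \<Rightarrow> 'g \<Rightarrow> 'g"
    and Ym :: "'y measure" and Gm :: "'g measure"
    and f1 f0 :: "real \<Rightarrow> 'g \<Rightarrow> 'y \<Rightarrow> real"
    and F1 F0 fU :: "'g \<Rightarrow> 'y \<Rightarrow> real"
    and gpsi :: "real \<Rightarrow> 'a" and Jac :: "'a \<Rightarrow> 'y \<Rightarrow> real"
    and f :: "'g \<Rightarrow> real" and h :: "'l::euclidean_space \<Rightarrow> 'g \<Rightarrow> real"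
    and Psi :: "real set" and Lam :: "'l set" and psis :: real
  assumes sigma_finite_Ym: "sigma_finite_measure Ym"
    and sigma_finite_Gm: "sigma_finite_measure Gm"
    and group_G: "group G"
    and actY_act: "group_action_on G (space Ym) actY"
    and actG_act: "group_action_on G (space Gm) actG"
    and actY_meas: "\<forall>g\<in>carrier G. actY g \<in> Ym \<rightarrow>\<^sub>M Ym"
    and actG_meas: "\<forall>g\<in>carrier G. actG g \<in> Gm \<rightarrow>\<^sub>M Gm"
    and F1_dens: "\<forall>\<gamma>\<in>space Gm. prob_density Ym (F1 \<gamma>) \<and> (\<forall>y\<in>space Ym. 0 < F1 \<gamma> y)"
    and F0_dens: "\<forall>\<gamma>\<in>space Gm. prob_density Ym (F0 \<gamma>) \<and> (\<forall>y\<in>space Ym. 0 < F0 \<gamma> y)"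
    and F1_measurable: "(\<lambda>z. F1 (fst z) (snd z)) \<in> borel_measurable (Gm \<Otimes>\<^sub>M Ym)"
    and F0_measurable: "(\<lambda>z. F0 (fst z) (snd z)) \<in> borel_measurable (Gm \<Otimes>\<^sub>M Ym)"
    and open_Psi: "open Psi" and psis_in_Psi: "psis \<in> Psi" and open_Lam: "open Lam"
    and f_density: "prob_density Gm f"
    and h_dens: "\<forall>lam\<in>Lam. prob_density Gm (h lam)"
    and gpsi_G: "\<forall>psi\<in>Psi. gpsi psi \<in> carrier G"
    and sym_par: "\<forall>psi\<in>Psi. \<forall>\<gamma>\<in>space Gm. \<forall>y\<in>space Ym.
          f1 psi \<gamma> y = F1 (actG (gpsi psi) \<gamma>) y \<and>
          f0 psi \<gamma> y = F0 (actG (inv\<^bsub>G\<^esub> (gpsi psi)) \<gamma>) y"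
    and Jac: "\<forall>psi\<in>Psi. \<forall>g\<in>{gpsi psi, inv\<^bsub>G\<^esub> (gpsi psi)}.
          Jac g \<in> borel_measurable Ym \<and> (\<forall>u\<in>space Ym. 0 \<le> Jac g u) \<and>
          distr (density Ym (\<lambda>u. ennreal (Jac g u))) Ym (actY g) = Ym"
    and fU: "\<forall>psi\<in>Psi. \<forall>\<gamma>\<in>space Gm. \<forall>u\<in>space Ym.
          fU \<gamma> u = F1 (actG (gpsi psi) \<gamma>) (actY (gpsi psi) u) * Jac (gpsi psi) u \<and>
          fU \<gamma> u = F0 (actG (inv\<^bsub>G\<^esub> (gpsi psi)) \<gamma>) (actY (inv\<^bsub>G\<^esub> (gpsi psi)) u)
                      * Jac (inv\<^bsub>G\<^esub> (gpsi psi)) u"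
    and antisym: "\<forall>psi\<in>Psi. \<forall>\<gamma>\<in>space Gm. \<forall>u1\<in>space Ym. \<forall>u0\<in>space Ym.
          cond_score f1 f0 psi \<gamma> (actY (gpsi psi) u1) (actY (inv\<^bsub>G\<^esub> (gpsi psi)) u0)
            = - cond_score f1 f0 psi \<gamma> (actY (gpsi psi) u0) (actY (inv\<^bsub>G\<^esub> (gpsi psi)) u1)"
    and concave: "\<forall>y1\<in>space Ym. \<forall>y0\<in>space Ym.
          strict_concave_on (Psi \<times> Lam) (\<lambda>(p, lam). pair_loglik f1 f0 Gm h p lam y1 y0)"
    and f_diff: "\<forall>psi\<in>Psi. \<forall>\<gamma>\<in>space Gm. \<forall>y\<in>space Ym.
          (\<lambda>p. f1 p \<gamma> y) differentiable (at psi) \<and> (\<lambda>p. f0 p \<gamma> y) differentiable (at psi)"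
    and lik_int: "\<forall>psi\<in>Psi. \<forall>lam\<in>Lam. \<forall>y1\<in>space Ym. \<forall>y0\<in>space Ym.
          integrable Gm (\<lambda>\<gamma>. f1 psi \<gamma> y1 * f0 psi \<gamma> y0 * h lam \<gamma>)"
    and lik_deriv: "\<forall>psi\<in>Psi. \<forall>lam\<in>Lam. \<forall>y1\<in>space Ym. \<forall>y0\<in>space Ym.
          ((\<lambda>p. pair_lik f1 f0 Gm h p lam y1 y0) has_real_derivative
             (\<integral>\<gamma>. deriv (\<lambda>p. f1 p \<gamma> y1 * f0 p \<gamma> y0) psi * h lam \<gamma> \<partial>Gm)) (at psi)"
    and score_Em_int: "\<forall>psi\<in>Psi. \<forall>lam\<in>Lam.
          Em_integrable Ym (true_dens f1 f0 Gm f psis) (dpsi (pair_loglik f1 f0 Gm h) psi lam)"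
    and Em_mixed: "\<forall>lam\<in>Lam. \<forall>b\<in>Basis.
          ((\<lambda>t. Em Ym (true_dens f1 f0 Gm f psis) (dpsi (pair_loglik f1 f0 Gm h) psis (lam + t *\<^sub>R b)))
             has_real_derivative
             Em Ym (true_dens f1 f0 Gm f psis) (dlam (dpsi (pair_loglik f1 f0 Gm h)) b psis lam)) (at 0)"
begin

lemmas actY_closed = actY_act[unfolded group_action_on_def, THEN conjunct1, rule_format]
lemmas actG_closed = actG_act[unfolded group_action_on_def, THEN conjunct1, rule_format]
lemmas actY_measurable = actY_meas[rule_format]
lemmas actG_measurable = actG_meas[rule_format]
lemmas F1_density = F1_dens[rule_format, THEN conjunct1]
lemmas F1_pos = F1_dens[rule_format, THEN conjunct2, rule_format]
lemmas F0_density = F0_dens[rule_format, THEN conjunct1]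
lemmas F0_pos = F0_dens[rule_format, THEN conjunct2, rule_format]
lemmas h_density = h_dens[rule_format]
lemmas gpsi_carrier = gpsi_G[rule_format]
lemmas f1_eq = sym_par[rule_format, THEN conjunct1]
lemmas f0_eq = sym_par[rule_format, THEN conjunct2]
lemmas Jac_measurable = Jac[rule_format, THEN conjunct1]
lemmas Jac_nonneg = Jac[rule_format, THEN conjunct2, THEN conjunct1, rule_format]
lemmas Jac_distr = Jac[rule_format, THEN conjunct2, THEN conjunct2]
lemmas fU_eq_F1 = fU[rule_format, THEN conjunct1]
lemmas fU_eq_F0 = fU[rule_format, THEN conjunct2]
lemmas cond_score_antisym = antisym[rule_format]
lemmas loglik_strict_concave = concave[rule_format]
lemmas f1_differentiable = f_diff[rule_format, THEN conjunct1]
lemmas f0_differentiable = f_diff[rule_format, THEN conjunct2]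
lemmas lik_integrable = lik_int[rule_format]
lemmas lik_has_derivative = lik_deriv[rule_format]
lemmas score_Em_integrable = score_Em_int[rule_format]
lemmas Em_score_has_derivative = Em_mixed[rule_format]

abbreviation "m \<equiv> true_dens f1 f0 Gm f psis"
abbreviation "lik \<equiv> pair_lik f1 f0 Gm h"
abbreviation "ell \<equiv> pair_loglik f1 f0 Gm h"
abbreviation "lik_dpsi psi lam y1 y0 \<equiv> \<integral>\<gamma>. deriv (\<lambda>p. f1 p \<gamma> y1 * f0 p \<gamma> y0) psi * h lam \<gamma> \<partial>Gm"
abbreviation "ginv psi \<equiv> inv\<^bsub>G\<^esub> (gpsi psi)"

lemma ginv_carrier: "psi \<in> Psi \<Longrightarrow> ginv psi \<in> carrier G"
  using group.inv_closed[OF group_G] gpsi_carrier by blast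

lemma f1_pos: "psi \<in> Psi \<Longrightarrow> \<gamma> \<in> space Gm \<Longrightarrow> y \<in> space Ym \<Longrightarrow> 0 < f1 psi \<gamma> y"
  by (simp add: f1_eq F1_pos actG_closed gpsi_carrier)

lemma f0_pos: "psi \<in> Psi \<Longrightarrow> \<gamma> \<in> space Gm \<Longrightarrow> y \<in> space Ym \<Longrightarrow> 0 < f0 psi \<gamma> y"
  by (simp add: f0_eq F0_pos actG_closed ginv_carrier)

lemma lik_pos:
  assumes "psi \<in> Psi" "lam \<in> Lam" "y1 \<in> space Ym" "y0 \<in> space Ym"
  shows "0 < lik psi lam y1 y0"
  unfolding pair_lik_def using assms
  by (intro integral_pos_mult_prob_density h_density lik_integrable) (simp_all add: f1_pos f0_pos)

lemma ell_has_derivative: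
  assumes "psi \<in> Psi" "lam \<in> Lam" "y1 \<in> space Ym" "y0 \<in> space Ym"
  shows "((\<lambda>p. ell p lam y1 y0) has_real_derivative lik_dpsi psi lam y1 y0 / lik psi lam y1 y0) (at psi)"
  using DERIV_chain2[OF DERIV_ln_divide[OF lik_pos[OF assms]] lik_has_derivative[OF assms]]
  by (simp add: pair_loglik_def field_simps)

lemma dpsi_ell:
  assumes "psi \<in> Psi" "lam \<in> Lam" "y1 \<in> space Ym" "y0 \<in> space Ym"
  shows "dpsi ell psi lam y1 y0 = lik_dpsi psi lam y1 y0 / lik psi lam y1 y0"
  unfolding dpsi_def by (rule DERIV_imp_deriv[OF ell_has_derivative[OF assms]])

definition pair_mixture :: "('g \<Rightarrow> real) \<Rightarrow> 'y \<Rightarrow> 'y \<Rightarrow> real" where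
  "pair_mixture w u1 u0 = (\<integral>\<gamma>. fU \<gamma> u1 * fU \<gamma> u0 * w \<gamma> \<partial>Gm)"

definition score_mixture :: "real \<Rightarrow> 'l \<Rightarrow> 'y \<Rightarrow> 'y \<Rightarrow> real" where
  "score_mixture psi lam u1 u0 = (\<integral>\<gamma>. cond_score f1 f0 psi \<gamma> (actY (gpsi psi) u1) (actY (ginv psi) u0)
      * (fU \<gamma> u1 * fU \<gamma> u0 * h lam \<gamma>) \<partial>Gm)"

lemma pair_mixture_commute: "pair_mixture w u1 u0 = pair_mixture w u0 u1"
  by (simp add: pair_mixture_def mult_ac)

lemma score_mixture_antisym:
  assumes "psi \<in> Psi" "u1 \<in> space Ym" "u0 \<in> space Ym"
  shows "score_mixture psi lam u0 u1 = - score_mixture psi lam u1 u0"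
  unfolding score_mixture_def integral_minus[symmetric] using assms
  by (intro Bochner_Integration.integral_cong) (simp_all add: cond_score_antisym[of psi _ u1 u0] mult_ac)

lemma Jac_mult_mixture:
  assumes "psi \<in> Psi" "u1 \<in> space Ym" "u0 \<in> space Ym"
  shows "Jac (gpsi psi) u1 * Jac (ginv psi) u0
      * (\<integral>\<gamma>. f1 psi \<gamma> (actY (gpsi psi) u1) * f0 psi \<gamma> (actY (ginv psi) u0) * w \<gamma> \<partial>Gm)
    = pair_mixture w u1 u0"
  unfolding pair_mixture_def integral_mult_right_zero[symmetric] using assms
  by (intro Bochner_Integration.integral_cong)
     (simp_all add: f1_eq f0_eq fU_eq_F1[OF assms(1) _ assms(2)] fU_eq_F0[OF assms(1) _ assms(3)]
        actY_closed gpsi_carrier ginv_carrier mult_ac)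

lemma Jac_mult_lik_dpsi:
  assumes "psi \<in> Psi" "u1 \<in> space Ym" "u0 \<in> space Ym"
  shows "Jac (gpsi psi) u1 * Jac (ginv psi) u0 * lik_dpsi psi lam (actY (gpsi psi) u1) (actY (ginv psi) u0)
    = score_mixture psi lam u1 u0"
proof -
  have y: "actY (gpsi psi) u1 \<in> space Ym" "actY (ginv psi) u0 \<in> space Ym"
    using assms by (simp_all add: actY_closed gpsi_carrier ginv_carrier)
  have "deriv (\<lambda>p. f1 p \<gamma> (actY (gpsi psi) u1) * f0 p \<gamma> (actY (ginv psi) u0)) psi
      = cond_score f1 f0 psi \<gamma> (actY (gpsi psi) u1) (actY (ginv psi) u0)
        * (f1 psi \<gamma> (actY (gpsi psi) u1) * f0 psi \<gamma> (actY (ginv psi) u0))" if "\<gamma> \<in> space Gm" for \<gamma>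
    unfolding cond_score_def using assms(1) y that
    by (intro deriv_mult_eq_deriv_sum_ln f1_differentiable f0_differentiable f1_pos f0_pos)
  then show ?thesis
    unfolding score_mixture_def integral_mult_right_zero[symmetric] using assms y
    by (intro Bochner_Integration.integral_cong)
       (simp_all add: f1_eq f0_eq fU_eq_F1[OF assms(1) _ assms(2)] fU_eq_F0[OF assms(1) _ assms(3)]
          gpsi_carrier ginv_carrier mult_ac)
qed

lemma pullback_score_times_m:
  assumes lam: "lam \<in> Lam" and u: "u1 \<in> space Ym" "u0 \<in> space Ym"
  defines "y1 \<equiv> actY (gpsi psis) u1" and "y0 \<equiv> actY (ginv psis) u0"
  shows "Jac (gpsi psis) u1 * Jac (ginv psis) u0 * (dpsi ell psis lam y1 y0 * m y1 y0)
    = pair_mixture f u1 u0 * score_mixture psis lam u1 u0 / pair_mixture (h lam) u1 u0"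
proof -
  define J where "J = Jac (gpsi psis) u1 * Jac (ginv psis) u0"
  have m_eq: "J * m y1 y0 = pair_mixture f u1 u0"
    using Jac_mult_mixture[OF psis_in_Psi u] by (simp add: J_def y1_def y0_def true_dens_def)
  have lik_eq: "J * lik psis lam y1 y0 = pair_mixture (h lam) u1 u0"
    using Jac_mult_mixture[OF psis_in_Psi u] by (simp add: J_def y1_def y0_def pair_lik_def)
  have lik_dpsi_eq: "J * lik_dpsi psis lam y1 y0 = score_mixture psis lam u1 u0"
    using Jac_mult_lik_dpsi[OF psis_in_Psi u] by (simp add: J_def y1_def y0_def)
  have "J * (dpsi ell psis lam y1 y0 * m y1 y0)
      = pair_mixture f u1 u0 * score_mixture psis lam u1 u0 / pair_mixture (h lam) u1 u0"
  proof (cases "J = 0")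
    case True
    with m_eq show ?thesis by simp
  next
    case False
    have "dpsi ell psis lam y1 y0 = (J * lik_dpsi psis lam y1 y0) / (J * lik psis lam y1 y0)"
      using False u by (simp add: dpsi_ell psis_in_Psi lam y1_def y0_def actY_closed gpsi_carrier ginv_carrier)
    with m_eq lik_eq lik_dpsi_eq show ?thesis by (simp add: mult_ac)
  qed
  then show ?thesis by (simp add: J_def)
qed

lemma Em_score_eq_0:
  assumes lam: "lam \<in> Lam"
  shows "Em Ym m (dpsi ell psis lam) = 0"
proof -
  let ?T1 = "actY (gpsi psis)" and ?T0 = "actY (ginv psis)"
    and ?J1 = "Jac (gpsi psis)" and ?J0 = "Jac (ginv psis)"
  define \<Phi> where "\<Phi> = (\<lambda>z. dpsi ell psis lam (fst z) (snd z) * m (fst z) (snd z))"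
  have "integrable (Ym \<Otimes>\<^sub>M Ym) \<Phi>"
    using score_Em_integrable[OF psis_in_Psi lam] by (simp add: Em_integrable_def \<Phi>_def)
  then have [measurable]: "\<Phi> \<in> borel_measurable (Ym \<Otimes>\<^sub>M Ym)" by (rule borel_measurable_integrable)
  have g: "gpsi psis \<in> carrier G" "ginv psis \<in> carrier G"
    by (simp_all add: gpsi_carrier ginv_carrier psis_in_Psi)
  have [measurable]: "?T1 \<in> Ym \<rightarrow>\<^sub>M Ym" "?T0 \<in> Ym \<rightarrow>\<^sub>M Ym"
    "?J1 \<in> borel_measurable Ym" "?J0 \<in> borel_measurable Ym"
    using g by (simp_all add: actY_measurable Jac_measurable[OF psis_in_Psi])
  have "Em Ym m (dpsi ell psis lam) = (\<integral>z. ?J1 (fst z) * ?J0 (snd z) * \<Phi> (?T1 (fst z), ?T0 (snd z)) \<partial>(Ym \<Otimes>\<^sub>M Ym))"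
    unfolding Em_def \<Phi>_def[symmetric]
    by (rule integral_pair_measure_pullback[OF sigma_finite_Ym])
       (simp_all add: Jac_nonneg[OF psis_in_Psi] Jac_distr[OF psis_in_Psi])
  also have "\<dots> = 0"
  proof -
    have pullback_antisym: "?J1 u0 * ?J0 u1 * \<Phi> (?T1 u0, ?T0 u1) = - (?J1 u1 * ?J0 u0 * \<Phi> (?T1 u1, ?T0 u0))"
      if u: "u1 \<in> space Ym" "u0 \<in> space Ym" for u1 u0
      using pullback_score_times_m[OF lam u] pullback_score_times_m[OF lam u(2,1)]
        score_mixture_antisym[OF psis_in_Psi u] pair_mixture_commute[of _ u1 u0]
      by (simp add: \<Phi>_def)
    show ?thesis
      by (rule integral_antisymmetric_eq_0[OF sigma_finite_Ym])
         (measurable, simp only: fst_conv snd_conv, blast intro: pullback_antisym)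
  qed
  finally show ?thesis .
qed

lemma psis_m_orthogonal_Lam: "m_orthogonal Ym m ell psis Lam"
  unfolding m_orthogonal_def
proof (intro ballI)
  fix lam and b :: 'l assume lam: "lam \<in> Lam" and b: "b \<in> Basis"
  let ?S = "(\<lambda>t. lam + t *\<^sub>R b) -` Lam"
  have "open ?S" by (intro continuous_open_vimage open_Lam continuous_intros)
  moreover have "0 \<in> ?S" using lam by simp
  moreover have "(\<lambda>t. Em Ym m (dpsi ell psis (lam + t *\<^sub>R b))) constant_on ?S"
    unfolding constant_on_def by (auto simp: Em_score_eq_0)
  ultimately show "Em Ym m (dlam (dpsi ell) b psis lam) = 0"
    using nonzero_deriv_nonconstant[OF Em_score_has_derivative[OF lam b]] by blast
qed

lemma score_iterated_integral_eq_0: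
  assumes lam: "lam \<in> Lam"
  shows "(\<integral>y0. (\<integral>y1. dpsi ell psis lam y1 y0 * m y1 y0 \<partial>Ym) \<partial>Ym) = 0"
proof -
  interpret Y: sigma_finite_measure Ym by (rule sigma_finite_Ym)
  interpret YY: pair_sigma_finite Ym Ym ..
  have "integrable (Ym \<Otimes>\<^sub>M Ym) (\<lambda>(y1, y0). dpsi ell psis lam y1 y0 * m y1 y0)"
    using score_Em_integrable[OF psis_in_Psi lam] by (simp add: Em_integrable_def split_beta')
  then show ?thesis
    using Em_score_eq_0[OF lam] by (simp add: YY.integral_snd Em_def split_beta')
qed

lemma dpsi_ell_strict_antimono:
  assumes ab: "a \<in> Psi" "b \<in> Psi" "a < b" and lam: "lam \<in> Lam"
    and y: "y1 \<in> space Ym" "y0 \<in> space Ym"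
  shows "dpsi ell b lam y1 y0 < dpsi ell a lam y1 y0"
proof (rule strict_concave_on_deriv_less[OF _ open_Psi ab])
  show "strict_concave_on Psi (\<lambda>p. ell p lam y1 y0)"
    using strict_concave_on_Times_slice[OF loglik_strict_concave[OF y] lam] by simp
  show "((\<lambda>p. ell p lam y1 y0) has_real_derivative dpsi ell a lam y1 y0) (at a)"
    "((\<lambda>p. ell p lam y1 y0) has_real_derivative dpsi ell b lam y1 y0) (at b)"
    using ab lam y by (simp_all add: ell_has_derivative dpsi_ell)
qed

lemma m_nonneg: "y1 \<in> space Ym \<Longrightarrow> y0 \<in> space Ym \<Longrightarrow> 0 \<le> m y1 y0"
  using f_density unfolding true_dens_def prob_density_def
  by (auto intro!: Bochner_Integration.integral_nonneg mult_nonneg_nonneg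
      simp: less_imp_le f1_pos f0_pos psis_in_Psi)

lemma m_not_AE_zero: "\<not> (AE z in Ym \<Otimes>\<^sub>M Ym. m (fst z) (snd z) = 0)"
proof -
  let ?k1 = "\<lambda>\<gamma>. F1 (actG (gpsi psis) \<gamma>)" and ?k0 = "\<lambda>\<gamma>. F0 (actG (ginv psis) \<gamma>)"
  have g: "gpsi psis \<in> carrier G" "ginv psis \<in> carrier G"
    by (simp_all add: gpsi_carrier ginv_carrier psis_in_Psi)
  have "(\<lambda>z. (actG (gpsi psis) (fst z), snd z)) \<in> Gm \<Otimes>\<^sub>M Ym \<rightarrow>\<^sub>M Gm \<Otimes>\<^sub>M Ym"
    "(\<lambda>z. (actG (ginv psis) (fst z), snd z)) \<in> Gm \<Otimes>\<^sub>M Ym \<rightarrow>\<^sub>M Gm \<Otimes>\<^sub>M Ym"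
    using actG_measurable[OF g(1)] actG_measurable[OF g(2)] by measurable
  from measurable_compose[OF this(1) F1_measurable] measurable_compose[OF this(2) F0_measurable]
  have not_AE: "\<not> (AE z in Ym \<Otimes>\<^sub>M Ym. (\<integral>\<gamma>. ?k1 \<gamma> (fst z) * ?k0 \<gamma> (snd z) * f \<gamma> \<partial>Gm) = 0)"
    using g by (intro mixture_of_products_not_AE_zero sigma_finite_Ym sigma_finite_Gm f_density)
      (simp_all add: F1_density F0_density actG_closed)
  have m_eq: "m y1 y0 = (\<integral>\<gamma>. ?k1 \<gamma> y1 * ?k0 \<gamma> y0 * f \<gamma> \<partial>Gm)"
    if "y1 \<in> space Ym" "y0 \<in> space Ym" for y1 y0
    unfolding true_dens_def using that
    by (intro Bochner_Integration.integral_cong) (simp_all add: f1_eq f0_eq psis_in_Psi)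
  show ?thesis
  proof
    assume "AE z in Ym \<Otimes>\<^sub>M Ym. m (fst z) (snd z) = 0"
    moreover have "AE z in Ym \<Otimes>\<^sub>M Ym. z \<in> space (Ym \<Otimes>\<^sub>M Ym)" by (rule AE_space)
    ultimately have "AE z in Ym \<Otimes>\<^sub>M Ym. (\<integral>\<gamma>. ?k1 \<gamma> (fst z) * ?k0 \<gamma> (snd z) * f \<gamma> \<partial>Gm) = 0"
      by eventually_elim (auto simp: m_eq space_pair_measure)
    with not_AE show False ..
  qed
qed

lemma Em_score_strict_antimono:
  assumes ab: "a \<in> Psi" "b \<in> Psi" "a < b" and lam: "lam \<in> Lam"
  shows "Em Ym m (dpsi ell b lam) < Em Ym m (dpsi ell a lam)"
proof -
  have int: "integrable (Ym \<Otimes>\<^sub>M Ym) (\<lambda>z. dpsi ell psi lam (fst z) (snd z) * m (fst z) (snd z))"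
    if "psi \<in> Psi" for psi
    using score_Em_integrable[OF that lam] by (simp add: Em_integrable_def)
  have less: "\<forall>z\<in>space (Ym \<Otimes>\<^sub>M Ym). dpsi ell b lam (fst z) (snd z) < dpsi ell a lam (fst z) (snd z)"
    and nonneg: "\<forall>z\<in>space (Ym \<Otimes>\<^sub>M Ym). 0 \<le> m (fst z) (snd z)"
    using dpsi_ell_strict_antimono[OF ab lam] m_nonneg by (auto simp: space_pair_measure)
  have "Em Ym m (dpsi ell b lam) \<le> Em Ym m (dpsi ell a lam)"
    unfolding Em_def using less nonneg
    by (intro integral_mono int ab) (simp add: less_imp_le mult_right_mono)
  moreover have "Em Ym m (dpsi ell b lam) \<noteq> Em Ym m (dpsi ell a lam)"
    using AE_weight_eq_0_of_integral_eq[OF int[OF ab(1)] int[OF ab(2)] _ less nonneg] m_not_AE_zero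
    unfolding Em_def by metis
  ultimately show ?thesis by simp
qed

end

theorem proposition5:
  fixes G :: "'a::topological_space monoid"
    and actY :: "'a \<Rightarrow> 'y::topological_space \<Rightarrow> 'y"
    and actG :: "'a \<Rightarrow> 'g::topological_space \<Rightarrow> 'g"
    and Ym :: "'y measure" and Gm :: "'g measure"
    and f1 f0 :: "real \<Rightarrow> 'g \<Rightarrow> 'y \<Rightarrow> real"
    and F1 F0 fU :: "'g \<Rightarrow> 'y \<Rightarrow> real"
    and gpsi :: "real \<Rightarrow> 'a"
    and Jac :: "'a \<Rightarrow> 'y \<Rightarrow> real"
    and f :: "'g \<Rightarrow> real"
    and h :: "'l::euclidean_space \<Rightarrow> 'g \<Rightarrow> real"
    and Psi :: "real set" and Lam :: "'l set" and psis :: real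
  assumes sfY: "sigma_finite_measure Ym" and sfG: "sigma_finite_measure Gm"
    \<comment> \<open>transformation model\<close>
    and grp: "group G"
    and actY_act: "group_action_on G (space Ym) actY"
    and actG_act: "group_action_on G (space Gm) actG"
    and actY_cont: "continuous_on (carrier G \<times> space Ym) (\<lambda>(g, y). actY g y)"
    and actG_cont: "continuous_on (carrier G \<times> space Gm) (\<lambda>(g, \<gamma>). actG g \<gamma>)"
    and actY_meas: "\<forall>g\<in>carrier G. actY g \<in> Ym \<rightarrow>\<^sub>M Ym"
    and actG_meas: "\<forall>g\<in>carrier G. actG g \<in> Gm \<rightarrow>\<^sub>M Gm"
    and F1_dens: "\<forall>\<gamma>\<in>space Gm. prob_density Ym (F1 \<gamma>) \<and> (\<forall>y\<in>space Ym. 0 < F1 \<gamma> y)"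
    and F0_dens: "\<forall>\<gamma>\<in>space Gm. prob_density Ym (F0 \<gamma>) \<and> (\<forall>y\<in>space Ym. 0 < F0 \<gamma> y)"
    and F1_meas: "(\<lambda>z. F1 (fst z) (snd z)) \<in> borel_measurable (Gm \<Otimes>\<^sub>M Ym)"
    and F0_meas: "(\<lambda>z. F0 (fst z) (snd z)) \<in> borel_measurable (Gm \<Otimes>\<^sub>M Ym)"
    and F1_transf: "\<forall>g\<in>carrier G. \<forall>\<gamma>\<in>space Gm.
          distr (density Ym (\<lambda>y. ennreal (F1 \<gamma> y))) Ym (actY g)
            = density Ym (\<lambda>y. ennreal (F1 (actG g \<gamma>) y))"
    and F0_transf: "\<forall>g\<in>carrier G. \<forall>\<gamma>\<in>space Gm.
          distr (density Ym (\<lambda>y. ennreal (F0 \<gamma> y))) Ym (actY g)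
            = density Ym (\<lambda>y. ennreal (F0 (actG g \<gamma>) y))"
    \<comment> \<open>parameter spaces, true mixing density f, assumed mixing model h\<close>
    and Psi: "open Psi" "convex Psi" "psis \<in> Psi"
    and Lam: "open Lam" "convex Lam"
    and f_dens: "prob_density Gm f"
    and h_dens: "\<forall>lam\<in>Lam. prob_density Gm (h lam)"
    \<comment> \<open>symmetric parametrization\<close>
    and gpsi_G: "\<forall>psi\<in>Psi. gpsi psi \<in> carrier G"
    and sym_par: "\<forall>psi\<in>Psi. \<forall>\<gamma>\<in>space Gm. \<forall>y\<in>space Ym.
          f1 psi \<gamma> y = F1 (actG (gpsi psi) \<gamma>) y \<and>
          f0 psi \<gamma> y = F0 (actG (inv\<^bsub>G\<^esub> (gpsi psi)) \<gamma>) y"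
    and Jac: "\<forall>psi\<in>Psi. \<forall>g\<in>{gpsi psi, inv\<^bsub>G\<^esub> (gpsi psi)}.
          Jac g \<in> borel_measurable Ym \<and> (\<forall>u\<in>space Ym. 0 \<le> Jac g u) \<and>
          distr (density Ym (\<lambda>u. ennreal (Jac g u))) Ym (actY g) = Ym"
    and fU: "\<forall>psi\<in>Psi. \<forall>\<gamma>\<in>space Gm. \<forall>u\<in>space Ym.
          fU \<gamma> u = F1 (actG (gpsi psi) \<gamma>) (actY (gpsi psi) u) * Jac (gpsi psi) u \<and>
          fU \<gamma> u = F0 (actG (inv\<^bsub>G\<^esub> (gpsi psi)) \<gamma>) (actY (inv\<^bsub>G\<^esub> (gpsi psi)) u)
                      * Jac (inv\<^bsub>G\<^esub> (gpsi psi)) u"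
    \<comment> \<open>antisymmetry of the conditional score, expressed in u1, u0\<close>
    and antisym: "\<forall>psi\<in>Psi. \<forall>\<gamma>\<in>space Gm. \<forall>u1\<in>space Ym. \<forall>u0\<in>space Ym.
          cond_score f1 f0 psi \<gamma> (actY (gpsi psi) u1) (actY (inv\<^bsub>G\<^esub> (gpsi psi)) u0)
            = - cond_score f1 f0 psi \<gamma> (actY (gpsi psi) u0) (actY (inv\<^bsub>G\<^esub> (gpsi psi)) u1)"
    \<comment> \<open>strict concavity of the log-likelihood contribution\<close>
    and concave: "\<forall>y1\<in>space Ym. \<forall>y0\<in>space Ym.
          strict_concave_on (Psi \<times> Lam) (\<lambda>(p, lam). pair_loglik f1 f0 Gm h p lam y1 y0)"
    \<comment> \<open>standing regularity: differentiability, integrability, differentiation under the integral\<close>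
    and f_diff: "\<forall>psi\<in>Psi. \<forall>\<gamma>\<in>space Gm. \<forall>y\<in>space Ym.
          (\<lambda>p. f1 p \<gamma> y) differentiable (at psi) \<and> (\<lambda>p. f0 p \<gamma> y) differentiable (at psi)"
    and lik_int: "\<forall>psi\<in>Psi. \<forall>lam\<in>Lam. \<forall>y1\<in>space Ym. \<forall>y0\<in>space Ym.
          integrable Gm (\<lambda>\<gamma>. f1 psi \<gamma> y1 * f0 psi \<gamma> y0 * h lam \<gamma>)"
    and lik_deriv: "\<forall>psi\<in>Psi. \<forall>lam\<in>Lam. \<forall>y1\<in>space Ym. \<forall>y0\<in>space Ym.
          ((\<lambda>p. pair_lik f1 f0 Gm h p lam y1 y0) has_real_derivative
             (\<integral>\<gamma>. deriv (\<lambda>p. f1 p \<gamma> y1 * f0 p \<gamma> y0) psi * h lam \<gamma> \<partial>Gm)) (at psi)"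
    and Em_int: "\<forall>psi\<in>Psi. \<forall>lam\<in>Lam.
          Em_integrable Ym (true_dens f1 f0 Gm f psis) (pair_loglik f1 f0 Gm h psi lam) \<and>
          Em_integrable Ym (true_dens f1 f0 Gm f psis) (dpsi (pair_loglik f1 f0 Gm h) psi lam) \<and>
          (\<forall>b\<in>Basis. Em_integrable Ym (true_dens f1 f0 Gm f psis) (dlam (pair_loglik f1 f0 Gm h) b psi lam))"
    and Em_mixed: "\<forall>lam\<in>Lam. \<forall>b\<in>Basis.
          ((\<lambda>t. Em Ym (true_dens f1 f0 Gm f psis) (dpsi (pair_loglik f1 f0 Gm h) psis (lam + t *\<^sub>R b)))
             has_real_derivative
             Em Ym (true_dens f1 f0 Gm f psis) (dlam (dpsi (pair_loglik f1 f0 Gm h)) b psis lam)) (at 0)"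
  shows "m_orthogonal Ym (true_dens f1 f0 Gm f psis) (pair_loglik f1 f0 Gm h) psis Lam
     \<and> (\<forall>lam\<in>Lam.
          Em Ym (true_dens f1 f0 Gm f psis) (dpsi (pair_loglik f1 f0 Gm h) psis lam) = 0 \<and>
          (\<integral>y0. (\<integral>y1. dpsi (pair_loglik f1 f0 Gm h) psis lam y1 y0 * true_dens f1 f0 Gm f psis y1 y0 \<partial>Ym) \<partial>Ym) = 0)
     \<and> (\<forall>psi0\<in>Psi. \<forall>lam0\<in>Lam.
          solves_score Ym (true_dens f1 f0 Gm f psis) (pair_loglik f1 f0 Gm h) psi0 lam0 \<longrightarrow> psi0 = psis)"
proof -
  \<comment> \<open>Not needed: continuity of the actions, F1_transf, F0_transf, convexity of Psi and Lam,
    and the first and third parts of Em_int. The change of variables is supplied directly by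
    fU and Jac, and convexity of Psi comes with strict concavity.\<close>
  interpret symmetric_matched_pairs G actY actG Ym Gm f1 f0 F1 F0 fU gpsi Jac f h Psi Lam psis
    using Em_int by (intro symmetric_matched_pairs.intro assms) blast
  have "psi0 = psis" if "psi0 \<in> Psi" "lam0 \<in> Lam" "solves_score Ym m ell psi0 lam0" for psi0 lam0
    using that Em_score_strict_antimono[OF that(1) psis_in_Psi] Em_score_strict_antimono[OF psis_in_Psi that(1)]
      Em_score_eq_0 by (metis linorder_neqE_linordered_idom less_irrefl solves_score_def)
  then show ?thesis
    using psis_m_orthogonal_Lam Em_score_eq_0 score_iterated_integral_eq_0 by blast
qed

end
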